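(* Let $P_1$ and $P_2$ be a pair of compatible polygons (possibly with holes). Suppose that $P_1$ contains a dent $u,d,v$ (with peak $d$), and let $\Psi$ be the visibility region of $d$ in $P_1$. If $u$ and $v$ are not visible in $P_2$, then in any pair of compatible triangulations $T(P_1)$, $T(P_2)$ of $P_1$, $P_2$, the vertex $d$ is adjacent in $T(P_1)$ either to a Steiner point or to a vertex of $P_1$ other than $u$ and $v$ lying inside $\Psi$.
   Context: All polygons are vertex-labelled straight-line polygons in the plane; a polygon may have holes (a polygonal region), and a hole may degenerate to a single point. Two polygons are compatible if they have the same clockwise cyclic ordering of (labelled) vertices; two polygonal regions are compatible if their outer polygons are compatible and their holes correspond (via the labelling) to compatible holes. A triangulation $T(P)$ of a polygonal region $P$ is a subdivision of its interior into triangular faces (straight-line edges); the vertices of $T(P)$ that are not vertices of $P$ are called Steiner points. Two triangulations $T(P_1)$, $T(P_2)$ of compatible regions are compatible if every face of $T(P_1)$, considered as a labelled polygon, corresponds to a compatible face of $T(P_2)$, the labelling providing the correspondence (Steiner points are labelled so that they correspond between the two triangulations). Two points $a,b$ of $P$ are visible if the line segment between them lies strictly inside $P$. A dent on the boundary of $P$ consists of three consecutive vertices $u,d,v$ of $P$ such that $d$ is a convex vertex and $u,v$ are reflex vertices; $d$ is called the peak of the dent. The visibility region of $d$ is the set of all points inside $P$ that are visible to $d$. *)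

theory Defs
  imports "HOL-Analysis.Analysis"
begin

text \<open>A polygonal region is given by a list of
labels for the outer boundary cycle, a list of label lists for the holes, and a position map.
Convention: outer boundary listed clockwise, holes (with at least 3 vertices) listed
counterclockwise, so the region lies to the right when walking along any boundary cycle.\<close>

definition cross :: "complex \<Rightarrow> complex \<Rightarrow> real" where
  "cross a b = Im (cnj a * b)"

definition cyc_pt :: "'w list \<Rightarrow> nat \<Rightarrow> 'w" where
  "cyc_pt c i = c ! (i mod length c)"

definition cycle_bd :: "('w \<Rightarrow> complex) \<Rightarrow> 'w list \<Rightarrow> complex set" where
  "cycle_bd p c = (if length c = 1 then {p (hd c)}
     else (\<Union>i<length c. closed_segment (p (cyc_pt c i)) (p (cyc_pt c (Suc i)))))"

definition filled :: "('w \<Rightarrow> complex) \<Rightarrow> 'w list \<Rightarrow> complex set" where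
  "filled p c = cycle_bd p c \<union> inside (cycle_bd p c)"

definition simple_polygon :: "('w \<Rightarrow> complex) \<Rightarrow> 'w list \<Rightarrow> bool" where
  "simple_polygon p c \<longleftrightarrow> length c \<ge> 3 \<and> distinct c \<and> inj_on p (set c) \<and>
     (\<forall>i<length c. \<forall>j<length c. i \<noteq> j \<longrightarrow>
        closed_segment (p (cyc_pt c i)) (p (cyc_pt c (Suc i))) \<inter>
        closed_segment (p (cyc_pt c j)) (p (cyc_pt c (Suc j)))
        \<subseteq> {p (cyc_pt c i), p (cyc_pt c (Suc i))} \<inter> {p (cyc_pt c j), p (cyc_pt c (Suc j))})"

definition signed_area :: "('w \<Rightarrow> complex) \<Rightarrow> 'w list \<Rightarrow> real" where
  "signed_area p c = (\<Sum>i<length c. cross (p (cyc_pt c i)) (p (cyc_pt c (Suc i)))) / 2"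

text \<open>Using the same label lists for two position maps and these
orientation conventions expresses compatibility of the two regions.\<close>
definition polygonal_region :: "('w \<Rightarrow> complex) \<Rightarrow> 'w list \<Rightarrow> 'w list list \<Rightarrow> bool" where
  "polygonal_region p outer holes \<longleftrightarrow>
     simple_polygon p outer \<and> signed_area p outer < 0 \<and>
     distinct (concat (outer # holes)) \<and>
     (\<forall>h\<in>set holes. length h = 1 \<or> (simple_polygon p h \<and> signed_area p h > 0)) \<and>
     (\<forall>h\<in>set holes. filled p h \<subseteq> inside (cycle_bd p outer)) \<and>
     (\<forall>i<length holes. \<forall>j<length holes. i \<noteq> j \<longrightarrow>
        filled p (holes ! i) \<inter> filled p (holes ! j) = {})"

definition poly_vertices :: "'w list \<Rightarrow> 'w list list \<Rightarrow> 'w set" where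
  "poly_vertices outer holes = set (concat (outer # holes))"

definition region_int :: "('w \<Rightarrow> complex) \<Rightarrow> 'w list \<Rightarrow> 'w list list \<Rightarrow> complex set" where
  "region_int p outer holes = inside (cycle_bd p outer) - (\<Union>h\<in>set holes. filled p h)"

definition region_cl :: "('w \<Rightarrow> complex) \<Rightarrow> 'w list \<Rightarrow> 'w list list \<Rightarrow> complex set" where
  "region_cl p outer holes = filled p outer - (\<Union>h\<in>set holes. inside (cycle_bd p h))"

definition visible :: "('w \<Rightarrow> complex) \<Rightarrow> 'w list \<Rightarrow> 'w list list \<Rightarrow> 'w \<Rightarrow> 'w \<Rightarrow> bool" where
  "visible p outer holes a b \<longleftrightarrow> open_segment (p a) (p b) \<subseteq> region_int p outer holes"

definition vis_region :: "('w \<Rightarrow> complex) \<Rightarrow> 'w list \<Rightarrow> 'w list list \<Rightarrow> 'w \<Rightarrow> complex set" where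
  "vis_region p outer holes d =
     {x \<in> region_cl p outer holes. open_segment (p d) x \<subseteq> region_int p outer holes}"

definition consecutive :: "'w list \<Rightarrow> 'w list list \<Rightarrow> 'w \<Rightarrow> 'w \<Rightarrow> 'w \<Rightarrow> bool" where
  "consecutive outer holes u d v \<longleftrightarrow> (\<exists>c\<in>set (outer # holes). length c \<ge> 3 \<and>
     (\<exists>i<length c. cyc_pt c i = u \<and> cyc_pt c (Suc i) = d \<and> cyc_pt c (Suc (Suc i)) = v))"

text \<open>Region lies to the right of each boundary cycle: convex = right turn, reflex = left turn.\<close>
definition convex_vertex :: "('w \<Rightarrow> complex) \<Rightarrow> 'w list \<Rightarrow> 'w list list \<Rightarrow> 'w \<Rightarrow> bool" where
  "convex_vertex p outer holes x \<longleftrightarrow> (\<exists>c\<in>set (outer # holes). length c \<ge> 3 \<and>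
     (\<exists>i<length c. cyc_pt c (Suc i) = x \<and>
        cross (p x - p (cyc_pt c i)) (p (cyc_pt c (Suc (Suc i))) - p x) < 0))"

definition reflex_vertex :: "('w \<Rightarrow> complex) \<Rightarrow> 'w list \<Rightarrow> 'w list list \<Rightarrow> 'w \<Rightarrow> bool" where
  "reflex_vertex p outer holes x \<longleftrightarrow> (\<exists>c\<in>set (outer # holes). length c \<ge> 3 \<and>
     (\<exists>i<length c. cyc_pt c (Suc i) = x \<and>
        cross (p x - p (cyc_pt c i)) (p (cyc_pt c (Suc (Suc i))) - p x) > 0))"

definition is_dent :: "('w \<Rightarrow> complex) \<Rightarrow> 'w list \<Rightarrow> 'w list list \<Rightarrow> 'w \<Rightarrow> 'w \<Rightarrow> 'w \<Rightarrow> bool" where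
  "is_dent p outer holes u d v \<longleftrightarrow> consecutive outer holes u d v \<and>
     convex_vertex p outer holes d \<and> reflex_vertex p outer holes u \<and> reflex_vertex p outer holes v"

text \<open>A triangulation: a finite set of faces (3-element label sets) with a position map q
extending p on the polygon vertices; labels not among polygon vertices are Steiner points.\<close>
definition triangulation :: "('w \<Rightarrow> complex) \<Rightarrow> 'w list \<Rightarrow> 'w list list \<Rightarrow> 'w set set \<Rightarrow> ('w \<Rightarrow> complex) \<Rightarrow> bool" where
  "triangulation p outer holes T q \<longleftrightarrow> finite T \<and>
     (\<forall>F\<in>T. card F = 3 \<and> \<not> collinear (q ` F)) \<and>
     (\<forall>F\<in>T. \<forall>G\<in>T. F \<noteq> G \<longrightarrow>
        convex hull (q ` F) \<inter> convex hull (q ` G) = convex hull (q ` (F \<inter> G))) \<and>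
     (\<Union>F\<in>T. convex hull (q ` F)) = region_cl p outer holes \<and>
     (\<forall>x\<in>poly_vertices outer holes. q x = p x \<and> (\<exists>F\<in>T. x \<in> F)) \<and>
     inj_on q (\<Union>T)"

definition compatible_faces :: "'w set set \<Rightarrow> ('w \<Rightarrow> complex) \<Rightarrow> ('w \<Rightarrow> complex) \<Rightarrow> bool" where
  "compatible_faces T q1 q2 \<longleftrightarrow> (\<forall>a b c. {a, b, c} \<in> T \<longrightarrow>
     sgn (cross (q1 b - q1 a) (q1 c - q1 a)) = sgn (cross (q2 b - q2 a) (q2 c - q2 a)))"

end

theory Submission
  imports Defs
begin

text \<open>Let \<open>F\<close> be a face of the triangulation containing the peak \<open>d\<close>. If some
face at \<open>d\<close> has a third vertex \<open>w \<notin> {u, v}\<close> that is a polygon vertex, then \<open>dw\<close> is not a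
boundary edge, because the boundary neighbours of \<open>d\<close> are exactly \<open>u\<close> and \<open>v\<close>; an edge of a
triangulation joining two polygon vertices that is not a boundary edge runs through the interior
of the region, so \<open>w\<close> is visible from \<open>d\<close>. Otherwise \<open>F = {u, d, v}\<close>. The boundary cycle
through the dent is not a triangle (in a triangle all turns have the same sign, but \<open>d\<close> is
convex and \<open>u\<close> reflex), so \<open>uv\<close> is not a boundary edge either; since the two triangulations
have the same faces, \<open>uv\<close> is an edge of \<open>T(P\<^sub>2)\<close> and hence \<open>u\<close> and \<open>v\<close> are visible in
\<open>P\<^sub>2\<close>, a contradiction.\<close>

abbreviation polygon_edge :: "('w \<Rightarrow> complex) \<Rightarrow> 'w list \<Rightarrow> nat \<Rightarrow> complex set" where
  "polygon_edge p c i \<equiv> closed_segment (p (cyc_pt c i)) (p (cyc_pt c (Suc i)))"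

section \<open>Boundaries of simple polygons are Jordan curves\<close>

fun polyline :: "complex list \<Rightarrow> real \<Rightarrow> complex" where
  "polyline [] = linepath 0 0"
| "polyline [x] = linepath x x"
| "polyline [x, y] = linepath x y"
| "polyline (x # y # z # r) = linepath x y +++ polyline (y # z # r)"

lemma pathstart_polyline: "pathstart (polyline (x # r)) = x"
  by (induction "x # r" arbitrary: x r rule: polyline.induct) auto

lemma pathfinish_polyline: "L \<noteq> [] \<Longrightarrow> pathfinish (polyline L) = last L"
  by (induction L rule: polyline.induct) auto

lemma path_image_polyline:
  "length L \<ge> 2 \<Longrightarrow> path_image (polyline L) = (\<Union>i<length L - 1. closed_segment (L ! i) (L ! Suc i))"
proof (induction L rule: polyline.induct)
  case (4 x y z r)
  have "path_image (polyline (x # y # z # r)) = closed_segment x y \<union> path_image (polyline (y # z # r))"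
    by (simp add: path_image_join pathstart_polyline)
  also have "\<dots> = closed_segment x y \<union>
      (\<Union>i<length r + 1. closed_segment ((y # z # r) ! i) ((y # z # r) ! Suc i))"
    using 4 by simp
  also have "\<dots> = (\<Union>i<Suc (length r + 1). closed_segment ((x # y # z # r) ! i) ((x # y # z # r) ! Suc i))"
    unfolding lessThan_Suc_eq_insert_0 by simp
  finally show ?case by simp
qed auto

lemma arc_polyline:
  assumes "length L \<ge> 2" "distinct L"
    "\<forall>i j. Suc i < length L \<longrightarrow> Suc j < length L \<longrightarrow> i \<noteq> j \<longrightarrow>
       closed_segment (L ! i) (L ! Suc i) \<inter> closed_segment (L ! j) (L ! Suc j)
       \<subseteq> {L ! i, L ! Suc i} \<inter> {L ! j, L ! Suc j}"
  shows "arc (polyline L)"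
  using assms
proof (induction L rule: polyline.induct)
  case (4 x y z r)
  have IH: "arc (polyline (y # z # r))"
    apply (rule 4(1))
    using 4(2-) apply simp_all
    apply (intro allI impI)
    subgoal for i j using 4(4)[rule_format, of "Suc i" "Suc j"] by simp
    done
  have "closed_segment x y \<inter> path_image (polyline (y # z # r)) \<subseteq> {y}"
  proof
    fix t assume t: "t \<in> closed_segment x y \<inter> path_image (polyline (y # z # r))"
    then obtain j where j: "j < length r + 1" "t \<in> closed_segment ((y # z # r) ! j) ((y # z # r) ! Suc j)"
      using path_image_polyline[of "y # z # r"] by auto
    have "t \<in> {x, y} \<inter> {(x # y # z # r) ! Suc j, (x # y # z # r) ! Suc (Suc j)}"
      using 4(4)[rule_format, of 0 "Suc j"] j t by auto
    moreover have "(x # y # z # r) ! Suc j \<in> set (y # z # r)"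
      "(x # y # z # r) ! Suc (Suc j) \<in> set (y # z # r)"
      using j(1) nth_mem[of j "y # z # r"] nth_mem[of "Suc j" "y # z # r"] by simp_all
    ultimately show "t \<in> {y}" using 4(3) by auto
  qed
  then show ?case
    using IH 4(3) by (auto intro!: arc_join simp: pathstart_polyline)
qed auto

lemma cyc_pt_eq_nth: "i < length c \<Longrightarrow> cyc_pt c i = c ! i"
  by (simp add: cyc_pt_def)

lemma simple_polygon_open_chain:
  assumes "simple_polygon p c"
  shows "arc (polyline (map p c))"
    and "path_image (polyline (map p c)) = (\<Union>i<length c - 1. polygon_edge p c i)"
    and "pathstart (polyline (map p c)) = p (cyc_pt c (length c))"
    and "pathfinish (polyline (map p c)) = p (cyc_pt c (length c - 1))"
proof -
  have n3: "length c \<ge> 3" and inj: "inj_on p (set c)" and dc: "distinct c"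
    using assms unfolding simple_polygon_def by auto
  have nth: "\<And>i. i < length c \<Longrightarrow> map p c ! i = p (cyc_pt c i)"
    by (simp add: cyc_pt_eq_nth)
  show "arc (polyline (map p c))"
  proof (rule arc_polyline)
    show "distinct (map p c)" using dc inj by (simp add: distinct_map)
    show "\<forall>i j. Suc i < length (map p c) \<longrightarrow> Suc j < length (map p c) \<longrightarrow> i \<noteq> j \<longrightarrow>
       closed_segment (map p c ! i) (map p c ! Suc i) \<inter> closed_segment (map p c ! j) (map p c ! Suc j)
       \<subseteq> {map p c ! i, map p c ! Suc i} \<inter> {map p c ! j, map p c ! Suc j}"
      using assms nth unfolding simple_polygon_def by (simp add: Suc_lessD)
  qed (use n3 in simp)
  have "path_image (polyline (map p c)) =
      (\<Union>i<length c - 1. closed_segment (map p c ! i) (map p c ! Suc i))"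
    using path_image_polyline[of "map p c"] n3 by simp
  also have "\<dots> = (\<Union>i<length c - 1. polygon_edge p c i)"
    using nth by (intro SUP_cong) auto
  finally show "path_image (polyline (map p c)) = (\<Union>i<length c - 1. polygon_edge p c i)" .
  show "pathstart (polyline (map p c)) = p (cyc_pt c (length c))"
    using n3 by (cases c) (auto simp: pathstart_polyline cyc_pt_def)
  have "c \<noteq> []" using n3 by auto
  then show "pathfinish (polyline (map p c)) = p (cyc_pt c (length c - 1))"
    using n3 by (simp add: pathfinish_polyline last_map last_conv_nth cyc_pt_def)
qed

lemma simple_polygon_closing_edge:
  assumes sp: "simple_polygon p c"
  shows "p (cyc_pt c (length c - 1)) \<noteq> p (cyc_pt c (length c))"
    and "path_image (polyline (map p c)) \<inter> polygon_edge p c (length c - 1)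
      \<subseteq> {p (cyc_pt c (length c - 1)), p (cyc_pt c (length c))}"
proof -
  define n where "n = length c"
  have n3: "n \<ge> 3" and dc: "distinct c" and inj: "inj_on p (set c)"
    and edges: "\<And>i j. i < n \<Longrightarrow> j < n \<Longrightarrow> i \<noteq> j \<Longrightarrow> polygon_edge p c i \<inter> polygon_edge p c j
      \<subseteq> {p (cyc_pt c i), p (cyc_pt c (Suc i))} \<inter> {p (cyc_pt c j), p (cyc_pt c (Suc j))}"
    using sp unfolding simple_polygon_def n_def by auto
  have "c ! (n - 1) \<noteq> c ! 0" using n3 dc by (subst nth_eq_iff_index_eq) (auto simp: n_def)
  moreover have "c ! (n - 1) \<in> set c" "c ! 0 \<in> set c" using n3 by (auto simp: n_def intro!: nth_mem)
  ultimately show "p (cyc_pt c (length c - 1)) \<noteq> p (cyc_pt c (length c))"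
    using inj_on_eq_iff[OF inj] n3 by (simp add: cyc_pt_def n_def)
  show "path_image (polyline (map p c)) \<inter> polygon_edge p c (length c - 1)
      \<subseteq> {p (cyc_pt c (length c - 1)), p (cyc_pt c (length c))}"
  proof
    fix t assume t: "t \<in> path_image (polyline (map p c)) \<inter> polygon_edge p c (length c - 1)"
    then obtain j where j: "j < n - 1" "t \<in> polygon_edge p c j"
      using simple_polygon_open_chain(2)[OF sp] by (auto simp: n_def)
    have "polygon_edge p c j \<inter> polygon_edge p c (n - 1) \<subseteq> {p (cyc_pt c (n - 1)), p (cyc_pt c n)}"
      using edges[of j "n - 1"] j(1) n3 by auto
    then show "t \<in> {p (cyc_pt c (length c - 1)), p (cyc_pt c (length c))}"
      using j(2) t by (auto simp: n_def)
  qed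
qed

lemma simple_polygon_boundary_loop:
  assumes sp: "simple_polygon p c"
  obtains g where "simple_path g" "pathfinish g = pathstart g" "path_image g = cycle_bd p c"
proof -
  define n where "n = length c"
  define g1 where "g1 = polyline (map p c)"
  define g2 where "g2 = linepath (p (cyc_pt c (n - 1))) (p (cyc_pt c n))"
  note chain = simple_polygon_open_chain[OF sp, folded g1_def n_def]
  note closing = simple_polygon_closing_edge[OF sp, folded g1_def n_def]
  have n3: "n \<ge> 3" using sp unfolding simple_polygon_def n_def by auto
  have last_edge: "path_image g2 = polygon_edge p c (n - 1)"
    using n3 by (simp add: g2_def)
  have "arc g2" using closing(1) by (simp add: g2_def)
  moreover have "path_image g1 \<inter> path_image g2 \<subseteq> {pathstart g1, pathstart g2}"
    using closing(2) chain(3) unfolding last_edge by (simp add: g2_def insert_commute)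
  ultimately have "simple_path (g1 +++ g2)"
    using simple_path_join_loop[OF chain(1)] chain(3,4) by (simp add: g2_def)
  moreover have "pathfinish (g1 +++ g2) = pathstart (g1 +++ g2)"
    using chain(3) by (simp add: g2_def)
  moreover have "path_image (g1 +++ g2) = cycle_bd p c"
  proof -
    have "path_image (g1 +++ g2) = path_image g1 \<union> path_image g2"
      using chain(4) by (simp add: path_image_join g2_def)
    also have "\<dots> = (\<Union>i<Suc (n - 1). polygon_edge p c i)"
      unfolding last_edge chain(2) lessThan_Suc by auto
    also have "\<dots> = cycle_bd p c"
    proof -
      have "Suc (n - 1) = n" using n3 by simp
      then show ?thesis using n3 unfolding n_def by (simp add: cycle_bd_def)
    qed
    finally show ?thesis .
  qed
  ultimately show ?thesis using that by blast
qed

lemma simple_polygon_boundary_in_closure: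
  assumes "simple_polygon p c" "y \<in> cycle_bd p c"
  shows "y \<in> closure (inside (cycle_bd p c))" "y \<in> closure (outside (cycle_bd p c))"
proof -
  obtain g where g: "simple_path g" "pathfinish g = pathstart g" "path_image g = cycle_bd p c"
    using simple_polygon_boundary_loop[OF assms(1)] by blast
  from Jordan_inside_outside[OF g(1,2)] g(3) assms(2)
  show "y \<in> closure (inside (cycle_bd p c))" "y \<in> closure (outside (cycle_bd p c))"
    by (auto simp: frontier_def)
qed

section \<open>Cross products and triangles\<close>

lemma cross_Re_Im: "cross a b = Re a * Im b - Im a * Re b"
  by (simp add: cross_def)

lemma collinear_iff_cross: "collinear {A, B, C} \<longleftrightarrow> cross (B - A) (C - A) = 0"
proof -
  have swap: "{A, B, C} = {B, A, C}" by auto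
  have "collinear {A, B, C} \<longleftrightarrow> collinear {0, B - A, C - A}"
    unfolding swap by (rule collinear_3) simp
  also have "\<dots> \<longleftrightarrow> (C - A) / (B - A) \<in> \<real>" by (rule collinear_iff_Reals)
  also have "\<dots> \<longleftrightarrow> cross (B - A) (C - A) = 0"
    by (auto simp: complex_is_Real_iff Im_divide cross_Re_Im field_simps)
  finally show ?thesis .
qed

lemma collinear_if_in_closed_segment:
  fixes a b z :: "'a :: euclidean_space"
  shows "z \<in> closed_segment a b \<Longrightarrow> collinear {a, b, z}"
  using collinear_between_cases[of a b z] between_mem_segment by blast

text \<open>Barycentric coordinates of \<open>z\<close> with respect to a nondegenerate triangle \<open>ABC\<close> are the
signed areas of the triangles \<open>zBC\<close>, \<open>AzC\<close>, \<open>ABz\<close> divided by that of \<open>ABC\<close>.\<close>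

lemma cross_barycentric_sum:
  assumes "cross (B - A) (C - A) \<noteq> 0"
  shows "cross (B - z) (C - z) / cross (B - A) (C - A) + cross (C - z) (A - z) / cross (B - A) (C - A)
       + cross (A - z) (B - z) / cross (B - A) (C - A) = 1"
proof -
  have "cross (B - z) (C - z) + cross (C - z) (A - z) + cross (A - z) (B - z) = cross (B - A) (C - A)"
    unfolding cross_Re_Im by simp algebra
  then show ?thesis using assms by (simp add: add_divide_distrib[symmetric])
qed

lemma cross_barycentric_combination:
  assumes "cross (B - A) (C - A) \<noteq> 0"
  shows "z = (cross (B - z) (C - z) / cross (B - A) (C - A)) *\<^sub>R A
           + (cross (C - z) (A - z) / cross (B - A) (C - A)) *\<^sub>R B
           + (cross (A - z) (B - z) / cross (B - A) (C - A)) *\<^sub>R C"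
proof -
  define D where "D = cross (B - A) (C - A)"
  have "Re z * D = cross (B - z) (C - z) * Re A + cross (C - z) (A - z) * Re B + cross (A - z) (B - z) * Re C"
    "Im z * D = cross (B - z) (C - z) * Im A + cross (C - z) (A - z) * Im B + cross (A - z) (B - z) * Im C"
    unfolding D_def cross_Re_Im by (simp, algebra)+
  then show ?thesis using assms unfolding D_def[symmetric]
    by (simp add: complex_eq_iff field_simps)
qed

lemma in_interior_triangle_if_barycentric_pos:
  assumes D: "cross (B - A) (C - A) \<noteq> 0"
    and pos: "0 < cross (B - z) (C - z) / cross (B - A) (C - A)"
      "0 < cross (C - z) (A - z) / cross (B - A) (C - A)"
      "0 < cross (A - z) (B - z) / cross (B - A) (C - A)"
  shows "z \<in> interior (convex hull {A, B, C})"
proof -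
  define D where "D = cross (B - A) (C - A)"
  define U where "U = {z. 0 < cross (B - z) (C - z) / D \<and> 0 < cross (C - z) (A - z) / D
                          \<and> 0 < cross (A - z) (B - z) / D}"
  have "open U" unfolding U_def cross_Re_Im
    by (intro open_Collect_conj open_Collect_less continuous_intros) (use D in \<open>auto simp: D_def\<close>)
  moreover have "U \<subseteq> convex hull {A, B, C}"
  proof
    fix y assume y: "y \<in> U"
    show "y \<in> convex hull {A, B, C}"
      unfolding convex_hull_3
      using y cross_barycentric_combination[OF D, of y] cross_barycentric_sum[OF D, of y]
      unfolding U_def D_def by (intro CollectI exI) auto
  qed
  moreover have "z \<in> U" using pos unfolding U_def D_def by auto
  ultimately show ?thesis using interior_maximal by blast
qed

lemma cross_shifted_from_edge:
  assumes "x = (1 - s) *\<^sub>R A + s *\<^sub>R B"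
  shows "cross (B - (x + t *\<^sub>R w)) (C - (x + t *\<^sub>R w)) = (1 - s) * cross (B - A) (C - A) + t * cross (C - B) w"
    and "cross (C - (x + t *\<^sub>R w)) (A - (x + t *\<^sub>R w)) = s * cross (B - A) (C - A) + t * cross (A - C) w"
    and "cross (A - (x + t *\<^sub>R w)) (B - (x + t *\<^sub>R w)) = t * cross (B - A) w"
  unfolding assms cross_Re_Im by (simp add: scaleR_conv_of_real, algebra)+

lemma add_mult_pos_if_small:
  fixes c a t :: real
  assumes "0 < c" "\<bar>t\<bar> \<le> c / (\<bar>a\<bar> + 1) / 2"
  shows "0 < c + t * a"
proof -
  have "\<bar>t\<bar> * (\<bar>a\<bar> + 1) \<le> c / 2" using assms(2) by (simp add: field_simps)
  then have "\<bar>t * a\<bar> < c" using assms(1) by (simp add: abs_mult algebra_simps)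
  then show ?thesis by linarith
qed

lemma shift_in_open_segment:
  assumes "x = (1 - r) *\<^sub>R P + r *\<^sub>R Q" "0 < r" "r < 1" "P \<noteq> Q" "\<bar>t\<bar> < min r (1 - r)"
  shows "x + t *\<^sub>R (Q - P) \<in> open_segment P Q"
proof -
  have "0 < r + t" "r + t < 1" using assms(5) by linarith+
  moreover have "x + t *\<^sub>R (Q - P) = (1 - (r + t)) *\<^sub>R P + (r + t) *\<^sub>R Q"
    unfolding assms(1) by (simp add: algebra_simps)
  ultimately show ?thesis using assms(4) by (auto simp: in_segment)
qed

text \<open>Move from the crossing point a little along \<open>PQ\<close>, towards the side of \<open>AB\<close> on
which \<open>C\<close> lies.\<close>

lemma segment_crossing_edge_meets_interior_triangle:
  assumes D: "cross (B - A) (C - A) \<noteq> 0" and xAB: "x \<in> open_segment A B" and xPQ: "x \<in> open_segment P Q"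
    and transversal: "cross (B - A) (Q - P) \<noteq> 0"
  shows "\<exists>y \<in> open_segment P Q. y \<in> interior (convex hull {A, B, C})"
proof -
  define D where "D = cross (B - A) (C - A)"
  have D0: "D \<noteq> 0" using D by (simp add: D_def)
  obtain s where s: "0 < s" "s < 1" "x = (1 - s) *\<^sub>R A + s *\<^sub>R B" using xAB by (auto simp: in_segment)
  obtain r where r: "0 < r" "r < 1" "x = (1 - r) *\<^sub>R P + r *\<^sub>R Q" "P \<noteq> Q"
    using xPQ by (auto simp: in_segment)
  define w where "w = Q - P"
  define a1 where "a1 = cross (C - B) w / D"
  define b1 where "b1 = cross (A - C) w / D"
  define k where "k = cross (B - A) w / D"
  define m where "m = min (min ((1 - s) / (\<bar>a1\<bar> + 1) / 2) (s / (\<bar>b1\<bar> + 1) / 2)) (min r (1 - r) / 2)"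
  have m0: "0 < m" using s r by (simp add: m_def)
  have ma: "m \<le> (1 - s) / (\<bar>a1\<bar> + 1) / 2" and mb: "m \<le> s / (\<bar>b1\<bar> + 1) / 2"
    unfolding m_def by (rule min.coboundedI1, rule min.cobounded1)+ (rule min.coboundedI1, rule min.cobounded2)
  define t where "t = (if k > 0 then m else - m)"
  have tm: "\<bar>t\<bar> = m" using m0 by (simp add: t_def)
  define y where "y = x + t *\<^sub>R w"
  have "y \<in> interior (convex hull {A, B, C})"
  proof (rule in_interior_triangle_if_barycentric_pos[OF D])
    have "cross (B - y) (C - y) / D = (1 - s) + t * a1"
      unfolding y_def cross_shifted_from_edge[OF s(3)] a1_def D_def[symmetric] using D0 by (simp add: field_simps)
    also have "0 < \<dots>" by (rule add_mult_pos_if_small) (use s tm ma in auto)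
    finally show "0 < cross (B - y) (C - y) / cross (B - A) (C - A)" by (simp add: D_def)
    have "cross (C - y) (A - y) / D = s + t * b1"
      unfolding y_def cross_shifted_from_edge[OF s(3)] b1_def D_def[symmetric] using D0 by (simp add: field_simps)
    also have "0 < \<dots>" by (rule add_mult_pos_if_small) (use s tm mb in auto)
    finally show "0 < cross (C - y) (A - y) / cross (B - A) (C - A)" by (simp add: D_def)
    have "k \<noteq> 0" using transversal D0 by (simp add: k_def w_def)
    have "cross (A - y) (B - y) / D = t * k"
      unfolding y_def cross_shifted_from_edge[OF s(3)] k_def D_def[symmetric] using D0 by (simp add: field_simps)
    also have "0 < \<dots>" using \<open>k \<noteq> 0\<close> m0 by (auto simp: t_def zero_less_mult_iff)
    finally show "0 < cross (A - y) (B - y) / cross (B - A) (C - A)" by (simp add: D_def)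
  qed
  moreover have "m \<le> min r (1 - r) / 2" unfolding m_def by (rule min.cobounded2)
  then have "y \<in> open_segment P Q"
    unfolding y_def w_def using shift_in_open_segment[OF r(3,1,2,4)] r(1,2) tm m0 by simp
  ultimately show ?thesis by blast
qed

lemma cross_eq_0_imp_scaleR:
  assumes "cross u v = 0" "u \<noteq> 0"
  shows "\<exists>l::real. v = l *\<^sub>R u"
proof -
  define l where "l = (Re u * Re v + Im u * Im v) / ((Re u)\<^sup>2 + (Im u)\<^sup>2)"
  have n: "(Re u)\<^sup>2 + (Im u)\<^sup>2 \<noteq> 0" using assms(2)
    by (metis complex_eq_iff power2_eq_square sum_power2_eq_zero_iff zero_complex.simps)
  have c: "Re u * Im v = Im u * Re v" using assms(1) by (simp add: cross_Re_Im)
  have "Re v * ((Re u)\<^sup>2 + (Im u)\<^sup>2) = (Re u * Re v + Im u * Im v) * Re u"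
    "Im v * ((Re u)\<^sup>2 + (Im u)\<^sup>2) = (Re u * Re v + Im u * Im v) * Im u"
    using c by (simp_all add: power2_eq_square algebra_simps)
  then have "v = l *\<^sub>R u" using n by (simp add: complex_eq_iff l_def field_simps)
  then show ?thesis by blast
qed

lemma line_point_in_open_segment:
  "d \<noteq> 0 \<Longrightarrow> 0 < m \<Longrightarrow> m < 1 \<Longrightarrow> A + m *\<^sub>R d \<in> open_segment A (A + d)"
  by (auto simp: in_segment algebra_simps intro!: exI[of _ m])

lemma line_point_in_closed_segment:
  fixes m a b :: real
  assumes "a \<le> m" "m \<le> b"
  shows "A + m *\<^sub>R d \<in> closed_segment (A + a *\<^sub>R d) (A + b *\<^sub>R d)"
proof (cases "a = b")
  case False
  then have ab: "a < b" using assms by simp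
  define u where "u = (m - a) / (b - a)"
  have "u * (b - a) = m - a" using ab by (simp add: u_def)
  then have "(1 - u) * a + u * b = m" by (simp add: algebra_simps)
  moreover have "(1 - u) *\<^sub>R (A + a *\<^sub>R d) + u *\<^sub>R (A + b *\<^sub>R d) = A + ((1 - u) * a + u * b) *\<^sub>R d"
    by (simp add: scaleR_conv_of_real algebra_simps)
  ultimately have "A + m *\<^sub>R d = (1 - u) *\<^sub>R (A + a *\<^sub>R d) + u *\<^sub>R (A + b *\<^sub>R d)"
    by simp
  moreover have "0 \<le> u" "u \<le> 1" using assms ab by (auto simp: u_def field_simps)
  ultimately show ?thesis by (auto simp: in_segment)
qed (use assms in simp)

lemma convex_combination_unit_interval_cases:
  fixes a b r s :: real
  assumes "s = (1 - r) * a + r * b" "0 < r" "r < 1" "0 < s" "s < 1"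
  shows "(0 < a \<and> a < 1) \<or> (0 < b \<and> b < 1) \<or> (a \<le> 0 \<and> 1 \<le> b) \<or> (b \<le> 0 \<and> 1 \<le> a)"
proof -
  have "\<not> (a \<le> 0 \<and> b \<le> 0)"
  proof
    assume "a \<le> 0 \<and> b \<le> 0"
    then have "(1 - r) * a \<le> 0" "r * b \<le> 0" using assms(2,3) by (auto simp: mult_nonneg_nonpos)
    then show False using assms(1,4) by linarith
  qed
  moreover have "\<not> (1 \<le> a \<and> 1 \<le> b)"
  proof
    assume "1 \<le> a \<and> 1 \<le> b"
    then have "(1 - r) * 1 \<le> (1 - r) * a" "r * 1 \<le> r * b" using assms(2,3) by (auto intro!: mult_left_mono)
    then have "(1 - r) * 1 + r * 1 \<le> (1 - r) * a + r * b" by (rule add_mono)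
    then show False using assms(1,5) by simp
  qed
  ultimately show ?thesis by linarith
qed

lemma collinear_open_segments_overlap:
  assumes xAB: "x \<in> open_segment A B" and xPQ: "x \<in> open_segment P Q" and par: "cross (B - A) (Q - P) = 0"
  shows "P \<in> open_segment A B \<or> Q \<in> open_segment A B \<or> (A \<in> closed_segment P Q \<and> B \<in> closed_segment P Q)"
proof -
  obtain s where s: "0 < s" "s < 1" "x = (1 - s) *\<^sub>R A + s *\<^sub>R B" "A \<noteq> B"
    using xAB by (auto simp: in_segment)
  obtain r where r: "0 < r" "r < 1" "x = (1 - r) *\<^sub>R P + r *\<^sub>R Q"
    using xPQ by (auto simp: in_segment)
  define d where "d = B - A"
  have d0: "d \<noteq> 0" using s(4) by (simp add: d_def)
  obtain l where l: "Q - P = l *\<^sub>R d" using cross_eq_0_imp_scaleR[OF par] d0 by (auto simp: d_def)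
  define a where "a = s - r * l"
  define b where "b = s + (1 - r) * l"
  have "x = P + r *\<^sub>R (Q - P)" using r(3) by (simp add: algebra_simps)
  moreover have "x = A + s *\<^sub>R d" using s(3) by (simp add: d_def algebra_simps)
  ultimately have P: "P = A + a *\<^sub>R d" using l by (simp add: a_def algebra_simps)
  have Q: "Q = A + b *\<^sub>R d" using P l by (simp add: a_def b_def algebra_simps)
  have B: "B = A + 1 *\<^sub>R d" by (simp add: d_def)
  have s_conv: "s = (1 - r) * a + r * b" by (simp add: a_def b_def algebra_simps)
  consider "0 < a \<and> a < 1" | "0 < b \<and> b < 1" | "a \<le> 0 \<and> 1 \<le> b" | "b \<le> 0 \<and> 1 \<le> a"
    using convex_combination_unit_interval_cases[OF s_conv r(1,2) s(1,2)] by blast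
  then show ?thesis
  proof cases
    case 1 then show ?thesis using line_point_in_open_segment[OF d0] P B by auto
  next
    case 2 then show ?thesis using line_point_in_open_segment[OF d0] Q B by auto
  next
    case 3
    then have "A + 0 *\<^sub>R d \<in> closed_segment P Q" "A + 1 *\<^sub>R d \<in> closed_segment P Q"
      unfolding P Q by (intro line_point_in_closed_segment; simp)+
    then show ?thesis using B by simp
  next
    case 4
    then have "A + 0 *\<^sub>R d \<in> closed_segment Q P" "A + 1 *\<^sub>R d \<in> closed_segment Q P"
      unfolding P Q by (intro line_point_in_closed_segment; simp)+
    then show ?thesis using B by (simp add: closed_segment_commute)
  qed
qed

section \<open>Polygonal regions\<close>

lemma cyc_pt_in_set: "c \<noteq> [] \<Longrightarrow> cyc_pt c i \<in> set c"
  by (simp add: cyc_pt_def)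

lemma polygon_edge_subset_cycle_bd: "length c \<noteq> 1 \<Longrightarrow> j < length c \<Longrightarrow> polygon_edge p c j \<subseteq> cycle_bd p c"
  by (auto simp: cycle_bd_def)

lemma vertex_in_cycle_bd:
  assumes "a \<in> set c" shows "p a \<in> cycle_bd p c"
proof (cases "length c = 1")
  case True
  then obtain x where "c = [x]" by (metis One_nat_def length_0_conv length_Suc_conv)
  then show ?thesis using assms by (simp add: cycle_bd_def)
next
  case False
  obtain k where k: "k < length c" "c ! k = a" using assms by (meson in_set_conv_nth)
  then have "p a \<in> polygon_edge p c k" by (simp add: cyc_pt_def)
  then show ?thesis using polygon_edge_subset_cycle_bd[OF False k(1)] by blast
qed

lemma region_cl_diff_region_int:
  "x \<in> region_cl p outer holes \<Longrightarrow> x \<notin> region_int p outer holes \<Longrightarrow>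
     \<exists>c\<in>set (outer # holes). x \<in> cycle_bd p c"
  unfolding region_cl_def region_int_def filled_def by auto

lemma closure_disjoint_interior: "S \<inter> X = {} \<Longrightarrow> closure S \<inter> interior X = {}"
  using interior_subset open_Int_closure_eq_empty[OF open_interior] by blast

text \<open>By the Jordan curve theorem every boundary point of the region is a limit of points
outside the outer polygon or inside a hole.\<close>

lemma cycle_bd_disjoint_interior_region_cl:
  assumes reg: "polygonal_region p outer holes" and c: "c \<in> set (outer # holes)" "length c \<noteq> 1"
  shows "cycle_bd p c \<inter> interior (region_cl p outer holes) = {}"
proof (cases "c = outer")
  case True
  have "simple_polygon p outer" using reg by (simp add: polygonal_region_def)
  then have "cycle_bd p c \<subseteq> closure (outside (cycle_bd p outer))"
    using simple_polygon_boundary_in_closure(2) True by blast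
  moreover have "outside (cycle_bd p outer) \<inter> region_cl p outer holes = {}"
    unfolding region_cl_def filled_def using inside_Int_outside outside_no_overlap by blast
  ultimately show ?thesis using closure_disjoint_interior by blast
next
  case False
  then have "c \<in> set holes" using c by simp
  then have "simple_polygon p c" "inside (cycle_bd p c) \<inter> region_cl p outer holes = {}"
    using reg c(2) by (auto simp: polygonal_region_def region_cl_def)
  then show ?thesis
    using simple_polygon_boundary_in_closure(1) closure_disjoint_interior by blast
qed

lemma cycle_bds_disjoint:
  assumes reg: "polygonal_region p outer holes"
    and c: "c \<in> set (outer # holes)" "c' \<in> set (outer # holes)" "c \<noteq> c'"
  shows "cycle_bd p c \<inter> cycle_bd p c' = {}"
proof -
  have in_outer: "\<And>h. h \<in> set holes \<Longrightarrow> cycle_bd p h \<subseteq> inside (cycle_bd p outer)"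
    using reg unfolding polygonal_region_def filled_def by blast
  have "cycle_bd p (holes ! i) \<inter> cycle_bd p (holes ! j) = {}"
    if "i < length holes" "j < length holes" "i \<noteq> j" for i j
    using reg that unfolding polygonal_region_def filled_def by blast
  then have holes_disjoint: "cycle_bd p h \<inter> cycle_bd p h' = {}"
    if "h \<in> set holes" "h' \<in> set holes" "h \<noteq> h'" for h h'
    using that by (metis in_set_conv_nth)
  consider "c = outer" "c' \<in> set holes" | "c' = outer" "c \<in> set holes"
    | "c \<in> set holes" "c' \<in> set holes"
    using c by auto
  then show ?thesis
  proof cases
    case 1
    then show ?thesis using in_outer[of c'] inside_no_overlap[of "cycle_bd p outer"] by blast
  next
    case 2
    then show ?thesis using in_outer[of c] inside_no_overlap[of "cycle_bd p outer"] by blast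
  next
    case 3
    then show ?thesis using holes_disjoint c(3) by blast
  qed
qed

lemma vertex_on_polygon_edge:
  assumes reg: "polygonal_region p outer holes" and a: "a \<in> poly_vertices outer holes"
    and c: "c \<in> set (outer # holes)" and sp: "simple_polygon p c" and j: "j < length c"
    and pa: "p a \<in> polygon_edge p c j"
  shows "a = cyc_pt c j \<or> a = cyc_pt c (Suc j)"
proof -
  have n3: "length c \<ge> 3" and inj: "inj_on p (set c)"
    and edges: "\<And>i. i < length c \<Longrightarrow> i \<noteq> j \<Longrightarrow> polygon_edge p c i \<inter> polygon_edge p c j
        \<subseteq> {p (cyc_pt c i), p (cyc_pt c (Suc i))} \<inter> {p (cyc_pt c j), p (cyc_pt c (Suc j))}"
    using sp j unfolding simple_polygon_def by auto
  obtain c' where c': "c' \<in> set (outer # holes)" "a \<in> set c'"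
    using a unfolding poly_vertices_def by auto
  have "p a \<in> cycle_bd p c" using polygon_edge_subset_cycle_bd[of c j p] n3 j pa by auto
  then have "c' = c" using cycle_bds_disjoint[OF reg c'(1) c] vertex_in_cycle_bd[OF c'(2)] by blast
  then obtain k where k: "k < length c" "cyc_pt c k = a"
    using c'(2) by (metis in_set_conv_nth cyc_pt_def mod_less)
  have "p a \<in> polygon_edge p c k" using k(2) by auto
  then have "k = j \<or> p a \<in> {p (cyc_pt c j), p (cyc_pt c (Suc j))}" using edges[OF k(1)] pa by blast
  moreover have "c \<noteq> []" using n3 by auto
  moreover have "a \<in> set c" using k(2) cyc_pt_in_set[OF \<open>c \<noteq> []\<close>] by blast
  ultimately show ?thesis using k(2) inj cyc_pt_in_set by (auto dest: inj_onD)
qed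

lemma cycle_bd_point_in_open_edge:
  assumes reg: "polygonal_region p outer holes" and c: "c \<in> set (outer # holes)"
    and x: "x \<in> cycle_bd p c" and off: "x \<notin> p ` set c"
  obtains j where "simple_polygon p c" "j < length c"
    "x \<in> open_segment (p (cyc_pt c j)) (p (cyc_pt c (Suc j)))"
proof -
  have l1: "length c \<noteq> 1"
  proof
    assume "length c = 1"
    then obtain h where "c = [h]" by (metis One_nat_def length_0_conv length_Suc_conv)
    then show False using x off by (simp add: cycle_bd_def)
  qed
  then have sp: "simple_polygon p c" using reg c unfolding polygonal_region_def by auto
  obtain j where j: "j < length c" and xj: "x \<in> polygon_edge p c j"
    using x l1 by (auto simp: cycle_bd_def)
  have "c \<noteq> []" using j by auto
  then have "x \<noteq> p (cyc_pt c j)" "x \<noteq> p (cyc_pt c (Suc j))"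
    using off imageI cyc_pt_in_set by metis+
  then show ?thesis using that sp j xj by (simp add: open_segment_def)
qed

section \<open>Edges of triangulations\<close>

context
  fixes p :: "'w \<Rightarrow> complex" and outer holes T q
  assumes tri: "triangulation p outer holes T q"
begin

lemma triangulation_face_nondegenerate: "F \<in> T \<Longrightarrow> card F = 3 \<and> \<not> collinear (q ` F)"
  using tri by (simp add: triangulation_def)

lemma triangulation_faces_meet:
  "F \<in> T \<Longrightarrow> G \<in> T \<Longrightarrow> F \<noteq> G \<Longrightarrow>
     convex hull (q ` F) \<inter> convex hull (q ` G) = convex hull (q ` (F \<inter> G))"
  using tri by (simp add: triangulation_def)

lemma triangulation_face_subset: "F \<in> T \<Longrightarrow> convex hull (q ` F) \<subseteq> region_cl p outer holes"
proof -
  have "(\<Union>F\<in>T. convex hull (q ` F)) = region_cl p outer holes"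
    using tri by (simp add: triangulation_def)
  then show "F \<in> T \<Longrightarrow> convex hull (q ` F) \<subseteq> region_cl p outer holes" by blast
qed

lemma triangulation_vertex_pos: "x \<in> poly_vertices outer holes \<Longrightarrow> q x = p x"
  using tri by (simp add: triangulation_def)

lemma triangulation_vertex_in_face: "x \<in> poly_vertices outer holes \<Longrightarrow> \<exists>F\<in>T. x \<in> F"
  using tri by (simp add: triangulation_def)

end

lemma card_3_obtain_third:
  assumes "card F = 3" "a \<in> F" "b \<in> F" "a \<noteq> b"
  obtains e where "F = {a, b, e}"
proof -
  have "finite F" using assms(1) by (metis card.infinite zero_neq_numeral)
  then have "card (F - {a, b}) = 1" using assms by (simp add: card_Diff_subset)
  then obtain e where "F - {a, b} = {e}" by (meson card_1_singletonE)
  then show ?thesis using that assms by auto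
qed

lemma card_3_obtain_others:
  assumes "card G = 3" "z \<in> G"
  obtains g1 g2 where "G = {z, g1, g2}"
proof -
  have "finite G" using assms(1) by (metis card.infinite zero_neq_numeral)
  then have "card (G - {z}) = 2" using assms by simp
  then obtain g1 g2 where "G - {z} = {g1, g2}" by (meson card_2_iff)
  then show ?thesis using that assms(2) by blast
qed

lemma card_3_subset_eq:
  assumes "card F = 3" "F \<subseteq> {a, b, c}"
  shows "F = {a, b, c}" "b \<noteq> c"
proof -
  have "card {a, b, c} \<le> 3" by (simp add: card_insert_le_m1)
  then show "F = {a, b, c}" using assms by (metis card_seteq finite.emptyI finite.insertI)
  then show "b \<noteq> c" using assms(1) by (auto simp: card_insert_if split: if_splits)
qed

lemma triangulation_face_obtain_third:
  assumes tri: "triangulation p outer holes T q" and F: "F \<in> T" "a \<in> F" "b \<in> F" "a \<noteq> b"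
  obtains e where "q ` F = {q a, q b, q e}" "cross (q b - q a) (q e - q a) \<noteq> 0"
proof -
  note nondeg = triangulation_face_nondegenerate[OF tri F(1)]
  obtain e where "F = {a, b, e}" using card_3_obtain_third[of F a b] F(2-4) nondeg by metis
  then have qF: "q ` F = {q a, q b, q e}" by auto
  then have "cross (q b - q a) (q e - q a) \<noteq> 0" using nondeg collinear_iff_cross by metis
  with qF show ?thesis using that by blast
qed

lemma triangulation_vertex_in_region_cl:
  assumes "triangulation p outer holes T q" "x \<in> poly_vertices outer holes"
  shows "p x \<in> region_cl p outer holes"
proof -
  obtain F where "F \<in> T" "x \<in> F"
    using triangulation_vertex_in_face[OF assms] by blast
  then have "p x \<in> convex hull (q ` F)"
    using triangulation_vertex_pos[OF assms] hull_inc imageI by metis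
  then show ?thesis using triangulation_face_subset[OF assms(1) \<open>F \<in> T\<close>] by blast
qed

text \<open>A vertex \<open>z\<close> in the relative interior of a face edge \<open>ab\<close> would lie in the hull of a
face \<open>G\<close> containing \<open>z\<close> and, since faces meet in common faces, in the hull of the other two
vertices of \<open>G\<close>, making \<open>G\<close> degenerate.\<close>

lemma triangulation_edge_avoids_vertices:
  assumes tri: "triangulation p outer holes T q" and F: "F \<in> T" "a \<in> F" "b \<in> F"
    and z: "z \<in> poly_vertices outer holes"
  shows "p z \<notin> open_segment (q a) (q b)"
proof
  assume pz: "p z \<in> open_segment (q a) (q b)"
  note nondeg = triangulation_face_nondegenerate[OF tri]
  obtain G where G: "G \<in> T" "z \<in> G" using triangulation_vertex_in_face[OF tri z] by blast
  have qz: "q z = p z" using triangulation_vertex_pos[OF tri z] .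
  have "p z \<in> convex hull {q a, q b}" using pz open_closed_segment segment_convex_hull by blast
  also have "\<dots> \<subseteq> convex hull (q ` F)" using F by (intro hull_mono) auto
  finally have in_F: "p z \<in> convex hull (q ` F)" .
  have "z \<in> F"
  proof (rule ccontr)
    assume zF: "z \<notin> F"
    obtain g1 g2 where g: "G = {z, g1, g2}"
      using card_3_obtain_others[of G z] nondeg[OF G(1)] G(2) by metis
    have "p z \<in> convex hull (q ` G)" using G qz by (metis hull_inc imageI)
    then have "p z \<in> convex hull (q ` (F \<inter> G))"
      using triangulation_faces_meet[OF tri F(1) G(1)] zF G(2) in_F by blast
    also have "\<dots> \<subseteq> convex hull {q g1, q g2}" using g zF by (intro hull_mono) auto
    finally have "collinear {q g1, q g2, q z}"
      using qz collinear_if_in_closed_segment by (simp add: segment_convex_hull)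
    moreover have "q ` G = {q g1, q g2, q z}" using g by auto
    ultimately show False using nondeg[OF G(1)] by simp
  qed
  moreover have "z \<noteq> a" "z \<noteq> b" "a \<noteq> b" using pz qz by (auto simp: open_segment_def)
  moreover obtain e where "F = {a, b, e}"
    using card_3_obtain_third[of F a b] F(2,3) nondeg[OF F(1)] \<open>a \<noteq> b\<close> by metis
  ultimately have "F = {a, b, z}" by blast
  moreover have "collinear {q a, q b, q z}"
    using pz qz by (intro collinear_if_in_closed_segment) (simp add: open_closed_segment)
  ultimately show False using nondeg[OF F(1)] by simp
qed

definition boundary_edge :: "'w list \<Rightarrow> 'w list list \<Rightarrow> 'w \<Rightarrow> 'w \<Rightarrow> bool" where
  "boundary_edge outer holes a b \<longleftrightarrow>
     (\<exists>c\<in>set (outer # holes). \<exists>i<length c. {cyc_pt c i, cyc_pt c (Suc i)} = {a, b})"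

lemma interior_face_disjoint_cycle_bd:
  assumes reg: "polygonal_region p outer holes" and tri: "triangulation p outer holes T q"
    and F: "F \<in> T" and c: "c \<in> set (outer # holes)" "length c \<noteq> 1"
  shows "interior (convex hull (q ` F)) \<inter> cycle_bd p c = {}"
  using interior_mono[OF triangulation_face_subset[OF tri F]] cycle_bd_disjoint_interior_region_cl[OF reg c]
  by blast

text \<open>The open edge \<open>ab\<close> can only meet the boundary along a boundary edge: a transversal
crossing would put boundary points into the interior of the face, and a collinear overlap
would force \<open>ab\<close> to be that boundary edge, since no vertex lies on \<open>ab\<close>.\<close>

lemma triangulation_edge_avoids_cycle_bd:
  assumes reg: "polygonal_region p outer holes" and tri: "triangulation p outer holes T q"
    and F: "F \<in> T" "a \<in> F" "b \<in> F" "a \<noteq> b"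
    and av: "a \<in> poly_vertices outer holes" and bv: "b \<in> poly_vertices outer holes"
    and not_bd: "\<not> boundary_edge outer holes a b"
    and c: "c \<in> set (outer # holes)"
  shows "open_segment (p a) (p b) \<inter> cycle_bd p c = {}"
proof (rule ccontr)
  assume "open_segment (p a) (p b) \<inter> cycle_bd p c \<noteq> {}"
  then obtain x where x: "x \<in> open_segment (p a) (p b)" "x \<in> cycle_bd p c" by blast
  have qab: "q a = p a" "q b = p b" using triangulation_vertex_pos[OF tri] av bv by auto
  have off: "p z \<notin> open_segment (p a) (p b)" if "z \<in> poly_vertices outer holes" for z
    using triangulation_edge_avoids_vertices[OF tri F(1-3) that] qab by simp
  have "set c \<subseteq> poly_vertices outer holes" using c unfolding poly_vertices_def by auto
  then have "x \<notin> p ` set c" using off x(1) by blast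
  then obtain j where sp: "simple_polygon p c" and j: "j < length c"
    and x': "x \<in> open_segment (p (cyc_pt c j)) (p (cyc_pt c (Suc j)))"
    using cycle_bd_point_in_open_edge[OF reg c x(2)] by blast
  have l1: "length c \<noteq> 1" using sp by (simp add: simple_polygon_def)
  define a' where "a' = cyc_pt c j"
  define b' where "b' = cyc_pt c (Suc j)"
  have "c \<noteq> []" using j by auto
  then have a'b': "a' \<in> poly_vertices outer holes" "b' \<in> poly_vertices outer holes"
    using cyc_pt_in_set \<open>set c \<subseteq> poly_vertices outer holes\<close> unfolding a'_def b'_def by blast+
  note x' = x'[folded a'_def b'_def]
  obtain e where qF: "q ` F = {p a, p b, q e}" and nondeg: "cross (p b - p a) (q e - p a) \<noteq> 0"
    by (rule triangulation_face_obtain_third[OF tri F, unfolded qab])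
  show False
  proof (cases "cross (p b - p a) (p b' - p a') = 0")
    case False
    obtain y where y: "y \<in> open_segment (p a') (p b')" "y \<in> interior (convex hull {p a, p b, q e})"
      using segment_crossing_edge_meets_interior_triangle[OF nondeg x(1) x' False] by blast
    have "y \<in> cycle_bd p c"
      using y(1) polygon_edge_subset_cycle_bd[OF l1 j, of p] open_closed_segment
      unfolding a'_def b'_def by blast
    then show False
      using interior_face_disjoint_cycle_bd[OF reg tri F(1) c l1, unfolded qF] y(2) by blast
  next
    case True
    have "p a \<in> closed_segment (p a') (p b')" "p b \<in> closed_segment (p a') (p b')"
      using collinear_open_segments_overlap[OF x(1) x' True] off a'b' by blast+
    then have "a = a' \<or> a = b'" "b = a' \<or> b = b'"
      using vertex_on_polygon_edge[OF reg _ c sp j] av bv unfolding a'_def b'_def by blast+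
    then have "{cyc_pt c j, cyc_pt c (Suc j)} = {a, b}" using F(4) unfolding a'_def b'_def by auto
    then have "boundary_edge outer holes a b" using c j unfolding boundary_edge_def by blast
    then show False using not_bd by contradiction
  qed
qed

lemma triangulation_edge_visible:
  assumes "polygonal_region p outer holes" and tri: "triangulation p outer holes T q"
    and F: "F \<in> T" "a \<in> F" "b \<in> F" "a \<noteq> b"
    and av: "a \<in> poly_vertices outer holes" and bv: "b \<in> poly_vertices outer holes"
    and "\<not> boundary_edge outer holes a b"
  shows "visible p outer holes a b"
  unfolding visible_def
proof
  fix x assume x: "x \<in> open_segment (p a) (p b)"
  have "q a = p a" "q b = p b" using triangulation_vertex_pos[OF tri] av bv by auto
  then have "x \<in> convex hull {q a, q b}" using x open_closed_segment segment_convex_hull by metis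
  also have "\<dots> \<subseteq> convex hull (q ` F)" using F by (intro hull_mono) auto
  also have "\<dots> \<subseteq> region_cl p outer holes" using triangulation_face_subset[OF tri F(1)] .
  finally show "x \<in> region_int p outer holes"
    using region_cl_diff_region_int triangulation_edge_avoids_cycle_bd[OF assms] x by blast
qed

section \<open>Vertices along the boundary cycles\<close>

lemma Suc_mod_eq_Suc_mod_iff: "Suc i mod n = Suc j mod n \<longleftrightarrow> i mod n = j mod n"
  by (metis Zero_not_Suc mod_Suc nat.inject)

lemma cyc_pt_cong: "i mod length c = j mod length c \<Longrightarrow> cyc_pt c i = cyc_pt c j"
  by (simp add: cyc_pt_def)

lemma cyc_pt_eq_iff:
  assumes "distinct c" "c \<noteq> []"
  shows "cyc_pt c i = cyc_pt c j \<longleftrightarrow> i mod length c = j mod length c"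
  using assms by (simp add: cyc_pt_def nth_eq_iff_index_eq)

lemma cyc_pt_eq_imp_same_cycle:
  assumes "distinct (concat cs)" "c \<in> set cs" "c' \<in> set cs" "c \<noteq> []" "c' \<noteq> []"
    and "cyc_pt c i = cyc_pt c' j"
  shows "c' = c \<and> i mod length c = j mod length c"
proof -
  have "set c \<inter> set c' \<noteq> {}"
    using assms(6) cyc_pt_in_set[OF assms(4), of i] cyc_pt_in_set[OF assms(5), of j] by auto
  then have "c' = c" using assms(1-3) unfolding distinct_concat_iff by metis
  moreover have "distinct c" using assms(1,2) unfolding distinct_concat_iff by blast
  ultimately show ?thesis using cyc_pt_eq_iff[of c i j] assms(4,6) by simp
qed

lemma cyc_pt_neighbours_eq:
  assumes "distinct (concat cs)" "c \<in> set cs" "c' \<in> set cs" "c \<noteq> []" "c' \<noteq> []"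
    and "cyc_pt c' (Suc j) = cyc_pt c (Suc i)"
  shows "cyc_pt c' j = cyc_pt c i" "cyc_pt c' (Suc (Suc j)) = cyc_pt c (Suc (Suc i))"
proof -
  from cyc_pt_eq_imp_same_cycle[OF assms(1,3,2,5,4,6)]
  have c': "c' = c" and "Suc i mod length c = Suc j mod length c" by auto
  then have "j mod length c = i mod length c" "Suc (Suc j) mod length c = Suc (Suc i) mod length c"
    by (simp_all only: Suc_mod_eq_Suc_mod_iff)
  from cyc_pt_cong[OF this(1)] cyc_pt_cong[OF this(2)]
  show "cyc_pt c' j = cyc_pt c i" "cyc_pt c' (Suc (Suc j)) = cyc_pt c (Suc (Suc i))"
    unfolding c' .
qed

lemma boundary_edge_sym: "boundary_edge outer holes a b \<longleftrightarrow> boundary_edge outer holes b a"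
  unfolding boundary_edge_def by (simp add: insert_commute)

lemma boundary_edge_endpoint_neighbours:
  assumes "distinct (concat (outer # holes))" "c \<in> set (outer # holes)" "c \<noteq> []"
    and "boundary_edge outer holes (cyc_pt c (Suc k)) w"
  shows "w = cyc_pt c k \<or> w = cyc_pt c (Suc (Suc k))"
proof -
  obtain c' i where c': "c' \<in> set (outer # holes)" "i < length c'"
    and e: "{cyc_pt c' i, cyc_pt c' (Suc i)} = {cyc_pt c (Suc k), w}"
    using assms(4) unfolding boundary_edge_def by blast
  have "c' \<noteq> []" using c' by auto
  from e consider "cyc_pt c' i = cyc_pt c (Suc k)" "w = cyc_pt c' (Suc i)"
    | "cyc_pt c' (Suc i) = cyc_pt c (Suc k)" "w = cyc_pt c' i"
    unfolding doubleton_eq_iff by blast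
  then show ?thesis
  proof cases
    case 1
    then have "c' = c" "Suc k mod length c = i mod length c"
      using cyc_pt_eq_imp_same_cycle[OF assms(1,2) c'(1) assms(3) \<open>c' \<noteq> []\<close> 1(1)[symmetric]]
      by auto
    then have "Suc (Suc k) mod length c = Suc i mod length c"
      by (simp only: Suc_mod_eq_Suc_mod_iff)
    then show ?thesis using 1 \<open>c' = c\<close> cyc_pt_cong[of "Suc (Suc k)" c "Suc i"] by simp
  next
    case 2
    then show ?thesis
      using cyc_pt_neighbours_eq(1)[OF assms(1,2) c'(1) assms(3) \<open>c' \<noteq> []\<close> 2(1)] by simp
  qed
qed

lemma boundary_edge_skipping_vertex_imp_triangle:
  assumes "distinct (concat (outer # holes))" "c \<in> set (outer # holes)" "length c \<ge> 3"
    and "boundary_edge outer holes (cyc_pt c k) (cyc_pt c (Suc (Suc k)))"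
  shows "length c = 3"
proof -
  have dc: "distinct c" using assms(1,2) distinct_concat_iff by blast
  have ne: "c \<noteq> []" using assms(3) by auto
  have "cyc_pt c k = cyc_pt c (Suc k) \<or> cyc_pt c k = cyc_pt c (Suc (Suc (Suc k)))"
    using boundary_edge_endpoint_neighbours[OF assms(1,2) ne, of "Suc k" "cyc_pt c k"] assms(4)
    by (simp add: boundary_edge_sym)
  then have "Suc k mod length c = k mod length c \<or> Suc (Suc (Suc k)) mod length c = k mod length c"
    using cyc_pt_eq_iff[OF dc ne] by metis
  moreover have "Suc k mod length c = k mod length c \<longleftrightarrow> length c dvd 1"
    using mod_eq_dvd_iff_nat[of k "Suc k"] by simp
  moreover have "Suc (Suc (Suc k)) mod length c = k mod length c \<longleftrightarrow> length c dvd 3"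
    using mod_eq_dvd_iff_nat[of k "Suc (Suc (Suc k))"] by simp
  ultimately have "length c dvd 1 \<or> length c dvd 3" by blast
  then show ?thesis using assms(3) by (auto dest: dvd_imp_le)
qed

lemma convex_vertexD:
  assumes "distinct (concat (outer # holes))" "c \<in> set (outer # holes)" "c \<noteq> []"
    and "convex_vertex p outer holes (cyc_pt c (Suc k))"
  shows "cross (p (cyc_pt c (Suc k)) - p (cyc_pt c k)) (p (cyc_pt c (Suc (Suc k))) - p (cyc_pt c (Suc k))) < 0"
proof -
  obtain c' i where c': "c' \<in> set (outer # holes)" "length c' \<ge> 3" "cyc_pt c' (Suc i) = cyc_pt c (Suc k)"
    and turn: "cross (p (cyc_pt c' (Suc i)) - p (cyc_pt c' i)) (p (cyc_pt c' (Suc (Suc i))) - p (cyc_pt c' (Suc i))) < 0"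
    using assms(4) unfolding convex_vertex_def by metis
  have "c' \<noteq> []" using c'(2) by auto
  from cyc_pt_neighbours_eq[OF assms(1,2) c'(1) assms(3) this c'(3)] turn c'(3)
  show ?thesis by simp
qed

lemma reflex_vertexD:
  assumes "distinct (concat (outer # holes))" "c \<in> set (outer # holes)" "c \<noteq> []"
    and "reflex_vertex p outer holes (cyc_pt c (Suc k))"
  shows "cross (p (cyc_pt c (Suc k)) - p (cyc_pt c k)) (p (cyc_pt c (Suc (Suc k))) - p (cyc_pt c (Suc k))) > 0"
proof -
  obtain c' i where c': "c' \<in> set (outer # holes)" "length c' \<ge> 3" "cyc_pt c' (Suc i) = cyc_pt c (Suc k)"
    and turn: "cross (p (cyc_pt c' (Suc i)) - p (cyc_pt c' i)) (p (cyc_pt c' (Suc (Suc i))) - p (cyc_pt c' (Suc i))) > 0"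
    using assms(4) unfolding reflex_vertex_def by metis
  have "c' \<noteq> []" using c'(2) by auto
  from cyc_pt_neighbours_eq[OF assms(1,2) c'(1) assms(3) this c'(3)] turn c'(3)
  show ?thesis by simp
qed

section \<open>Dents\<close>

lemma cross_consecutive_turns: "cross (a - c) (b - a) = cross (b - a) (c - b)"
  unfolding cross_Re_Im by simp algebra

text \<open>In a triangle the turns at all three vertices have the same sign.\<close>

lemma convex_reflex_consecutive_not_triangle:
  assumes "distinct (concat (outer # holes))" "c \<in> set (outer # holes)" "length c = 3"
    and "convex_vertex p outer holes (cyc_pt c (Suc k))" "reflex_vertex p outer holes (cyc_pt c k)"
  shows False
proof -
  have ne: "c \<noteq> []" using assms(3) by auto
  have "Suc (Suc (Suc m)) mod 3 = m mod 3" for m :: nat by presburger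
  then have "cyc_pt c (Suc (Suc (Suc k))) = cyc_pt c k" "cyc_pt c (Suc (Suc (Suc (Suc k)))) = cyc_pt c (Suc k)"
    using assms(3) cyc_pt_cong[of _ c] by metis+
  then have "cross (p (cyc_pt c k) - p (cyc_pt c (Suc (Suc k)))) (p (cyc_pt c (Suc k)) - p (cyc_pt c k)) > 0"
    using reflex_vertexD[OF assms(1,2) ne, of p "Suc (Suc k)"] assms(5) by simp
  moreover have "cross (p (cyc_pt c (Suc k)) - p (cyc_pt c k)) (p (cyc_pt c (Suc (Suc k))) - p (cyc_pt c (Suc k))) < 0"
    using convex_vertexD[OF assms(1,2) ne assms(4)] .
  ultimately show False
    using cross_consecutive_turns[where a = "p (cyc_pt c k)" and b = "p (cyc_pt c (Suc k))"
        and c = "p (cyc_pt c (Suc (Suc k)))"] by linarith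
qed

lemma is_dent_obtain_cycle:
  assumes "is_dent p outer holes u d v"
  obtains c i where "c \<in> set (outer # holes)" "length c \<ge> 3"
    "cyc_pt c i = u" "cyc_pt c (Suc i) = d" "cyc_pt c (Suc (Suc i)) = v"
  using assms unfolding is_dent_def consecutive_def by blast

lemma dent_poly_vertices:
  assumes "is_dent p outer holes u d v"
  shows "u \<in> poly_vertices outer holes" "d \<in> poly_vertices outer holes" "v \<in> poly_vertices outer holes"
proof -
  obtain c i where c: "c \<in> set (outer # holes)" "length c \<ge> 3"
    and uvd: "cyc_pt c i = u" "cyc_pt c (Suc i) = d" "cyc_pt c (Suc (Suc i)) = v"
    using is_dent_obtain_cycle[OF assms] .
  then have "c \<noteq> []" by auto
  then have "{u, d, v} \<subseteq> set c" using uvd cyc_pt_in_set by blast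
  then show "u \<in> poly_vertices outer holes" "d \<in> poly_vertices outer holes" "v \<in> poly_vertices outer holes"
    using c(1) unfolding poly_vertices_def by auto
qed

lemma dent_peak_boundary_neighbours:
  assumes reg: "polygonal_region p outer holes" and dent: "is_dent p outer holes u d v"
    and "boundary_edge outer holes d w"
  shows "w = u \<or> w = v"
proof -
  obtain c i where c: "c \<in> set (outer # holes)" "length c \<ge> 3"
    and uvd: "cyc_pt c i = u" "cyc_pt c (Suc i) = d" "cyc_pt c (Suc (Suc i)) = v"
    using is_dent_obtain_cycle[OF dent] .
  have dist: "distinct (concat (outer # holes))" using reg by (simp add: polygonal_region_def)
  have "c \<noteq> []" using c(2) by auto
  from boundary_edge_endpoint_neighbours[OF dist c(1) this, of i w] uvd assms(3) show ?thesis by simp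
qed

lemma dent_ends_not_boundary_edge:
  assumes reg: "polygonal_region p outer holes" and dent: "is_dent p outer holes u d v"
  shows "\<not> boundary_edge outer holes u v"
proof
  assume bd: "boundary_edge outer holes u v"
  obtain c i where c: "c \<in> set (outer # holes)" "length c \<ge> 3"
    and uvd: "cyc_pt c i = u" "cyc_pt c (Suc i) = d" "cyc_pt c (Suc (Suc i)) = v"
    using is_dent_obtain_cycle[OF dent] .
  have dist: "distinct (concat (outer # holes))" using reg by (simp add: polygonal_region_def)
  have "convex_vertex p outer holes (cyc_pt c (Suc i))" "reflex_vertex p outer holes (cyc_pt c i)"
    using dent uvd by (simp_all add: is_dent_def)
  then have "length c \<noteq> 3" using convex_reflex_consecutive_not_triangle[OF dist c(1)] by blast
  moreover have "length c = 3"
    using boundary_edge_skipping_vertex_imp_triangle[OF dist c] bd uvd by blast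
  ultimately show False by contradiction
qed

lemma triangulation_edge_in_vis_region:
  assumes "polygonal_region p outer holes" and tri: "triangulation p outer holes T q"
    and "F \<in> T" "d \<in> F" "w \<in> F" "d \<noteq> w"
    and "d \<in> poly_vertices outer holes" and wv: "w \<in> poly_vertices outer holes"
    and "\<not> boundary_edge outer holes d w"
  shows "p w \<in> vis_region p outer holes d"
  using triangulation_edge_visible[OF assms] triangulation_vertex_in_region_cl[OF tri wv]
  by (simp add: vis_region_def visible_def)

theorem lemma1:
  fixes outer :: "'w list" and holes :: "'w list list"
    and p1 p2 q1 q2 :: "'w \<Rightarrow> complex" and T :: "'w set set" and u d v :: 'w
  assumes "polygonal_region p1 outer holes"
    and "polygonal_region p2 outer holes"
    and "is_dent p1 outer holes u d v"
    and "\<not> visible p2 outer holes u v"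
    and "triangulation p1 outer holes T q1"
    and "triangulation p2 outer holes T q2"
    and "compatible_faces T q1 q2"
  shows "\<exists>w. w \<noteq> d \<and> (\<exists>F\<in>T. d \<in> F \<and> w \<in> F) \<and>
           (w \<notin> poly_vertices outer holes \<or>
            (w \<noteq> u \<and> w \<noteq> v \<and> p1 w \<in> vis_region p1 outer holes d))"
proof -
  note vertices = dent_poly_vertices[OF assms(3)]
  show ?thesis
  proof (cases "\<exists>F\<in>T. \<exists>w\<in>F. d \<in> F \<and> w \<notin> {d, u, v}")
    case True
    then obtain F w where F: "F \<in> T" "d \<in> F" "w \<in> F" and w: "w \<notin> {d, u, v}" by blast
    have "\<not> boundary_edge outer holes d w"
      using dent_peak_boundary_neighbours[OF assms(1,3)] w by blast
    then show ?thesis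
      using triangulation_edge_in_vis_region[OF assms(1,5) F] vertices(2) w F by blast
  next
    case False
    obtain F where F: "F \<in> T" "d \<in> F" using triangulation_vertex_in_face[OF assms(5) vertices(2)] by blast
    have card: "card F = 3" using triangulation_face_nondegenerate[OF assms(5) F(1)] by blast
    have "F \<subseteq> {d, u, v}" using False F by blast
    from card_3_subset_eq[OF card this] have "u \<in> F" "v \<in> F" "u \<noteq> v" by auto
    from triangulation_edge_visible[OF assms(2,6) F(1) this vertices(1,3)]
      dent_ends_not_boundary_edge[OF assms(1,3)]
    have "visible p2 outer holes u v" .
    with assms(4) show ?thesis by contradiction
  qed
qed

end
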